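(* Let $\mathcal{F}\subset L_2(\mu)$ be a class of real-valued functions on $\mathcal{X}$, and let $\overline{\mathcal{F}}=\{\mathcal{O}f:f\in\mathcal{F}\}$ and $\mathcal{F}_\perp=\{f-\mathcal{O}f:f\in\mathcal{F}\}$. Assume the (empirical) Rademacher complexities below are well defined on $\mathcal{F}$, $\overline{\mathcal{F}}$ and $\mathcal{F}_\perp$. Then, with the data distributed as $T\sim\otimes^n\mu$, \[0\le \mathfrak{R}_n(\mathcal{F})-\mathfrak{R}_n(\overline{\mathcal{F}})\le \mathfrak{R}_n(\mathcal{F}_\perp)\] whenever the terms are finite.
   Context: $\mathcal{G}$ is a compact, second countable, Hausdorff topological group with Haar probability measure $\lambda$, acting measurably on a nonempty Polish space $\mathcal{X}$. $\mu$ is a $\mathcal{G}$-invariant Borel probability measure on $\mathcal{X}$ and $L_2(\mu)$ is the usual space of (classes of) square-integrable real functions. $\mathcal{O}f(x)=\int_\mathcal{G}f(gx)\,d\lambda(g)$. For $T=(x_1,\dots,x_n)\in\mathcal{X}^n$ and a class $\mathcal{H}$ of real functions, the empirical Rademacher complexity is $\mathrm{Rad}_T(\mathcal{H})=\mathbb{E}\big[\sup_{h\in\mathcal{H}}\big|\frac1n\sum_{i=1}^n\varsigma_ih(x_i)\big|\big]$ with $\varsigma_1,\dots,\varsigma_n$ i.i.d. uniform on $\{-1,1\}$; for random $T$ the Rademacher complexity is $\mathfrak{R}_n(\mathcal{H})=\mathbb{E}[\mathrm{Rad}_T(\mathcal{H})]$. *)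

theory Defs
  imports "HOL-Probability.Probability"
begin

text \<open>Haar probability measure on a compact group (written additively, not necessarily
  commutative): a Borel probability measure invariant under left translations.\<close>
definition haar_prob :: "('g::{topological_group_add}) measure \<Rightarrow> bool" where
  "haar_prob lam \<longleftrightarrow> sets lam = sets borel \<and> prob_space lam \<and>
     (\<forall>g. distr lam borel (\<lambda>h. g + h) = lam)"

definition measurable_action :: "('g::{topological_group_add} \<Rightarrow> 'x::topological_space \<Rightarrow> 'x) \<Rightarrow> bool" where
  "measurable_action act \<longleftrightarrow> (\<forall>x. act 0 x = x) \<and> (\<forall>g h x. act (g + h) x = act g (act h x))
     \<and> (\<lambda>(g, x). act g x) \<in> borel \<Otimes>\<^sub>M borel \<rightarrow>\<^sub>M borel"

definition orbit_avg :: "'g measure \<Rightarrow> ('g \<Rightarrow> 'x \<Rightarrow> 'x) \<Rightarrow> ('x \<Rightarrow> real) \<Rightarrow> 'x \<Rightarrow> real" where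
  "orbit_avg lam act f x = (\<integral>g. f (act g x) \<partial>lam)"

definition sign_vectors :: "nat \<Rightarrow> (nat \<Rightarrow> real) set" where
  "sign_vectors n = {..<n} \<rightarrow>\<^sub>E {-1, 1}"

text \<open>Empirical Rademacher complexity Rad_T(H), with T = (T 0, ..., T (n-1)); the expectation
  over uniform i.i.d. signs is the average over the 2^n sign vectors. Values in ennreal
  (the supremum may be infinite).\<close>
definition emp_rad :: "nat \<Rightarrow> (nat \<Rightarrow> 'x) \<Rightarrow> ('x \<Rightarrow> real) set \<Rightarrow> ennreal" where
  "emp_rad n T H = (\<Sum>s\<in>sign_vectors n.
       (SUP h\<in>H. ennreal \<bar>(1 / real n) * (\<Sum>i<n. s i * h (T i))\<bar>)) / 2 ^ n"

definition rad_complexity :: "'x measure \<Rightarrow> nat \<Rightarrow> ('x \<Rightarrow> real) set \<Rightarrow> ennreal" where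
  "rad_complexity mu n H = (\<integral>\<^sup>+ T. emp_rad n T H \<partial>(PiM {..<n} (\<lambda>_. mu)))"

end

theory Submission
  imports Defs
begin

(* Every f splits as O f + (f - O f), so by the triangle inequality the supremum defining
   Rad_T(F) is at most the sum of those for the two derived classes; integrating over T gives
   the upper bound.  For the lower bound, |\<integral> h d\<lambda>| \<le> \<integral> |h| d\<lambda> applied to the Rademacher
   correlation of O f gives Rad_T(O F) \<le> \<integral> Rad_(g T)(F) d\<lambda>(g); integrating over T, swapping
   the integrals and using that T \<mapsto> g T preserves the product measure yields
   R_n(O F) \<le> R_n(F).  The integrability of g \<mapsto> f (g T_i) needed there is automatic when
   \<integral> Rad_(g T)(F) d\<lambda> is finite, because a single sample value is controlled by the
   Rademacher correlations (flip one sign). *)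

text \<open>Unlike \<open>nn_integral_add\<close>, no measurability is needed: it is applied to suprema over
  an arbitrary function class.\<close>
lemma nn_integral_add_le:
  "integral\<^sup>N M u + integral\<^sup>N M v \<le> (\<integral>\<^sup>+x. u x + v x \<partial>M)"
proof -
  let ?A = "{g. simple_function M g \<and> g \<le> u}"
  let ?B = "{g. simple_function M g \<and> g \<le> v}"
  have A_ne: "?A \<noteq> {}" and B_ne: "?B \<noteq> {}"
    by (auto intro!: exI[of _ "\<lambda>_. 0"] simp: le_fun_def)
  have "integral\<^sup>N M u + integral\<^sup>N M v = (SUP h\<in>?B. SUP g\<in>?A. integral\<^sup>S M g + integral\<^sup>S M h)"
    unfolding nn_integral_def
    by (simp add: ennreal_SUP_add_left[OF A_ne, symmetric] ennreal_SUP_add_right[OF B_ne])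
  also have "\<dots> \<le> (\<integral>\<^sup>+x. u x + v x \<partial>M)"
  proof (intro SUP_least)
    fix h g assume h: "h \<in> ?B" and g: "g \<in> ?A"
    then have "integral\<^sup>S M g + integral\<^sup>S M h = integral\<^sup>S M (\<lambda>x. g x + h x)"
      by simp
    also have "\<dots> \<le> (\<integral>\<^sup>+x. u x + v x \<partial>M)"
      unfolding nn_integral_def
      by (rule SUP_upper) (use g h in \<open>auto simp: le_fun_def intro: add_mono\<close>)
    finally show "integral\<^sup>S M g + integral\<^sup>S M h \<le> (\<integral>\<^sup>+x. u x + v x \<partial>M)" .
  qed
  finally show ?thesis .
qed

lemma sum_nn_integral_le:
  "(\<Sum>s\<in>S. integral\<^sup>N M (u s)) \<le> (\<integral>\<^sup>+x. (\<Sum>s\<in>S. u s x) \<partial>M)"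
proof (induction S rule: infinite_finite_induct)
  case (insert a S)
  then have "(\<Sum>s\<in>insert a S. integral\<^sup>N M (u s)) \<le> integral\<^sup>N M (u a) + (\<integral>\<^sup>+x. (\<Sum>s\<in>S. u s x) \<partial>M)"
    by (simp add: add_left_mono)
  also have "\<dots> \<le> (\<integral>\<^sup>+x. (\<Sum>s\<in>insert a S. u s x) \<partial>M)"
    using insert nn_integral_add_le by simp
  finally show ?case .
qed simp_all

lemma finite_sign_vectors: "finite (sign_vectors n)"
  unfolding sign_vectors_def by (auto intro!: finite_PiE)

definition rad_corr :: "nat \<Rightarrow> (nat \<Rightarrow> real) \<Rightarrow> (nat \<Rightarrow> real) \<Rightarrow> real" where
  "rad_corr n s a = (1 / real n) * (\<Sum>i<n. s i * a i)"

lemma rad_corr_add: "rad_corr n s (\<lambda>i. a i + b i) = rad_corr n s a + rad_corr n s b"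
  unfolding rad_corr_def by (simp add: distrib_left sum.distrib)

lemma pow2_mult_emp_rad:
  "2 ^ n * emp_rad n T H = (\<Sum>s\<in>sign_vectors n. SUP h\<in>H. ennreal \<bar>rad_corr n s (\<lambda>i. h (T i))\<bar>)"
  unfolding emp_rad_def rad_corr_def
  by (simp add: ennreal_times_divide mult.commute[of "2 ^ n"] ennreal_mult_divide_eq power_eq_top_ennreal)

lemma emp_rad_cong: "(\<And>i. i < n \<Longrightarrow> T i = T' i) \<Longrightarrow> emp_rad n T H = emp_rad n T' H"
  unfolding emp_rad_def by simp

text \<open>The all-ones sign vector and its flip at coordinate j have correlations differing by
  exactly 2 a j / n.\<close>
lemma abs_le_sum_rad_corr:
  assumes j: "j < n"
  shows "ennreal \<bar>a j\<bar> \<le> of_nat n * (\<Sum>s\<in>sign_vectors n. ennreal \<bar>rad_corr n s a\<bar>)"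
proof -
  define s0 where "s0 = (\<lambda>i\<in>{..<n}. (1::real))"
  define s1 where "s1 = s0(j := -1)"
  have s0: "s0 \<in> sign_vectors n" and s1: "s1 \<in> sign_vectors n"
    using j unfolding s0_def s1_def sign_vectors_def by (auto simp: PiE_iff extensional_def)
  have "s0 j \<noteq> s1 j" by (simp add: s0_def s1_def j)
  then have "s0 \<noteq> s1" by metis
  have "(\<Sum>i<n. s0 i * a i) - (\<Sum>i<n. s1 i * a i) = (\<Sum>i<n. if i = j then 2 * a j else 0)"
    unfolding sum_subtractf[symmetric] by (rule sum.cong) (simp_all add: s0_def s1_def)
  also have "\<dots> = 2 * a j" using j by simp
  finally have "a j = real n / 2 * (rad_corr n s0 a - rad_corr n s1 a)"
    using j unfolding rad_corr_def by (simp add: field_simps)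
  then have "\<bar>a j\<bar> = real n / 2 * \<bar>rad_corr n s0 a - rad_corr n s1 a\<bar>"
    by (metis abs_mult abs_of_nonneg divide_nonneg_nonneg of_nat_0_le_iff zero_le_numeral)
  also have "\<dots> \<le> real n * (\<bar>rad_corr n s0 a\<bar> + \<bar>rad_corr n s1 a\<bar>)"
    by (intro mult_mono) auto
  finally have "\<bar>a j\<bar> \<le> real n * (\<bar>rad_corr n s0 a\<bar> + \<bar>rad_corr n s1 a\<bar>)" .
  then have "ennreal \<bar>a j\<bar> \<le> of_nat n * (\<Sum>s\<in>{s0, s1}. ennreal \<bar>rad_corr n s a\<bar>)"
    using \<open>s0 \<noteq> s1\<close>
    by (simp add: ennreal_leI ennreal_of_nat_eq_real_of_nat flip: ennreal_plus ennreal_mult)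
  also have "\<dots> \<le> of_nat n * (\<Sum>s\<in>sign_vectors n. ennreal \<bar>rad_corr n s a\<bar>)"
    using s0 s1 by (intro mult_left_mono sum_mono2 finite_sign_vectors) auto
  finally show ?thesis .
qed

lemma abs_le_emp_rad:
  assumes "f \<in> H" and "j < n"
  shows "ennreal \<bar>f (T j)\<bar> \<le> of_nat n * (2 ^ n * emp_rad n T H)"
proof -
  have "ennreal \<bar>f (T j)\<bar> \<le> of_nat n * (\<Sum>s\<in>sign_vectors n. ennreal \<bar>rad_corr n s (\<lambda>i. f (T i))\<bar>)"
    using abs_le_sum_rad_corr[OF \<open>j < n\<close>] .
  also have "\<dots> \<le> of_nat n * (2 ^ n * emp_rad n T H)"
    unfolding pow2_mult_emp_rad using \<open>f \<in> H\<close>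
    by (intro mult_left_mono sum_mono SUP_upper) auto
  finally show ?thesis .
qed

lemma emp_rad_le_add:
  assumes "\<And>f. f \<in> F \<Longrightarrow> \<exists>h1\<in>H1. \<exists>h2\<in>H2. \<forall>x. f x = h1 x + h2 x"
  shows "emp_rad n T F \<le> emp_rad n T H1 + emp_rad n T H2"
proof -
  let ?sup = "\<lambda>H s. SUP h\<in>H. ennreal \<bar>rad_corr n s (\<lambda>i. h (T i))\<bar>"
  have "?sup F s \<le> ?sup H1 s + ?sup H2 s" for s
  proof (rule SUP_least)
    fix f assume "f \<in> F"
    then obtain h1 h2 where h: "h1 \<in> H1" "h2 \<in> H2" "\<And>x. f x = h1 x + h2 x"
      using assms by blast
    have "ennreal \<bar>rad_corr n s (\<lambda>i. f (T i))\<bar>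
        \<le> ennreal \<bar>rad_corr n s (\<lambda>i. h1 (T i))\<bar> + ennreal \<bar>rad_corr n s (\<lambda>i. h2 (T i))\<bar>"
      by (simp add: h(3) rad_corr_add ennreal_leI abs_triangle_ineq flip: ennreal_plus)
    also have "\<dots> \<le> ?sup H1 s + ?sup H2 s"
      using h by (intro add_mono SUP_upper)
    finally show "ennreal \<bar>rad_corr n s (\<lambda>i. f (T i))\<bar> \<le> ?sup H1 s + ?sup H2 s" .
  qed
  then have "2 ^ n * emp_rad n T F \<le> 2 ^ n * (emp_rad n T H1 + emp_rad n T H2)"
    unfolding distrib_left pow2_mult_emp_rad sum.distrib[symmetric] by (rule sum_mono)
  then show ?thesis
    by (simp add: ennreal_mult_le_mult_iff power_eq_top_ennreal)
qed

lemma rad_complexity_le_add: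
  assumes "\<And>f. f \<in> F \<Longrightarrow> \<exists>h1\<in>H1. \<exists>h2\<in>H2. \<forall>x. f x = h1 x + h2 x"
    and "(\<lambda>T. emp_rad n T H1) \<in> borel_measurable (PiM {..<n} (\<lambda>_. M))"
    and "(\<lambda>T. emp_rad n T H2) \<in> borel_measurable (PiM {..<n} (\<lambda>_. M))"
  shows "rad_complexity M n F \<le> rad_complexity M n H1 + rad_complexity M n H2"
  unfolding rad_complexity_def
  by (simp add: nn_integral_mono emp_rad_le_add[OF assms(1)] flip: nn_integral_add[OF assms(2,3)])

lemma rad_corr_orbit_avg_le:
  assumes "\<And>i. i < n \<Longrightarrow> integrable lam (\<lambda>g. f (act g (T i)))"
  shows "ennreal \<bar>rad_corr n s (\<lambda>i. orbit_avg lam act f (T i))\<bar>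
    \<le> (\<integral>\<^sup>+g. ennreal \<bar>rad_corr n s (\<lambda>i. f (act g (T i)))\<bar> \<partial>lam)"
proof -
  have avg: "rad_corr n s (\<lambda>i. orbit_avg lam act f (T i)) = (\<integral>g. rad_corr n s (\<lambda>i. f (act g (T i))) \<partial>lam)"
    using assms unfolding rad_corr_def orbit_avg_def by (simp add: integral_sum)
  have "integrable lam (\<lambda>g. rad_corr n s (\<lambda>i. f (act g (T i))))"
    using assms unfolding rad_corr_def by (intro integrable_mult_right integrable_sum) auto
  from integral_norm_bound_ennreal[OF this] show ?thesis
    unfolding avg real_norm_def .
qed

lemma emp_rad_orbit_avg_le:
  assumes f_meas: "\<And>f i. f \<in> F \<Longrightarrow> i < n \<Longrightarrow> (\<lambda>g. f (act g (T i))) \<in> borel_measurable lam"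
    and emp_meas: "(\<lambda>g. emp_rad n (\<lambda>i. act g (T i)) F) \<in> borel_measurable lam"
  shows "emp_rad n T ((\<lambda>f. orbit_avg lam act f) ` F) \<le> (\<integral>\<^sup>+g. emp_rad n (\<lambda>i. act g (T i)) F \<partial>lam)"
proof (cases "(\<integral>\<^sup>+g. emp_rad n (\<lambda>i. act g (T i)) F \<partial>lam) = \<infinity>")
  case False
  let ?sup = "\<lambda>s g. SUP f\<in>F. ennreal \<bar>rad_corr n s (\<lambda>i. f (act g (T i)))\<bar>"
  have integrable: "integrable lam (\<lambda>g. f (act g (T i)))" if "f \<in> F" "i < n" for f i
  proof (rule integrableI_bounded)
    have "(\<integral>\<^sup>+g. ennreal (norm (f (act g (T i)))) \<partial>lam)
        \<le> (\<integral>\<^sup>+g. of_nat n * (2 ^ n * emp_rad n (\<lambda>i. act g (T i)) F) \<partial>lam)"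
      using abs_le_emp_rad[OF that] by (intro nn_integral_mono) simp
    also have "\<dots> = of_nat n * (2 ^ n * (\<integral>\<^sup>+g. emp_rad n (\<lambda>i. act g (T i)) F \<partial>lam))"
      using emp_meas by (simp add: nn_integral_cmult)
    also have "\<dots> < \<infinity>"
      using False by (simp add: ennreal_mult_less_top less_top power_less_top_ennreal of_nat_less_top)
    finally show "(\<integral>\<^sup>+g. ennreal (norm (f (act g (T i)))) \<partial>lam) < \<infinity>" .
  qed (use f_meas that in auto)
  have "2 ^ n * emp_rad n T ((\<lambda>f. orbit_avg lam act f) ` F)
      \<le> (\<Sum>s\<in>sign_vectors n. \<integral>\<^sup>+g. ?sup s g \<partial>lam)"
    unfolding pow2_mult_emp_rad image_image
  proof (intro sum_mono SUP_least)
    fix s f assume "f \<in> F"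
    then have "ennreal \<bar>rad_corr n s (\<lambda>i. orbit_avg lam act f (T i))\<bar>
        \<le> (\<integral>\<^sup>+g. ennreal \<bar>rad_corr n s (\<lambda>i. f (act g (T i)))\<bar> \<partial>lam)"
      by (intro rad_corr_orbit_avg_le integrable)
    also have "\<dots> \<le> (\<integral>\<^sup>+g. ?sup s g \<partial>lam)"
      using \<open>f \<in> F\<close> by (intro nn_integral_mono SUP_upper)
    finally show "ennreal \<bar>rad_corr n s (\<lambda>i. orbit_avg lam act f (T i))\<bar> \<le> (\<integral>\<^sup>+g. ?sup s g \<partial>lam)" .
  qed
  also have "\<dots> \<le> (\<integral>\<^sup>+g. 2 ^ n * emp_rad n (\<lambda>i. act g (T i)) F \<partial>lam)"
    unfolding pow2_mult_emp_rad by (rule sum_nn_integral_le)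
  also have "\<dots> = 2 ^ n * (\<integral>\<^sup>+g. emp_rad n (\<lambda>i. act g (T i)) F \<partial>lam)"
    using emp_meas by (rule nn_integral_cmult)
  finally show ?thesis
    by (simp add: ennreal_mult_le_mult_iff power_eq_top_ennreal)
qed simp

lemma nn_integral_PiM_compose:
  assumes "finite I" and "prob_space M"
    and "f \<in> M \<rightarrow>\<^sub>M M" and "distr M M f = M"
    and "h \<in> borel_measurable (PiM I (\<lambda>_. M))"
  shows "(\<integral>\<^sup>+T. h (compose I f T) \<partial>PiM I (\<lambda>_. M)) = (\<integral>\<^sup>+T. h T \<partial>PiM I (\<lambda>_. M))"
proof -
  have "compose I f \<in> PiM I (\<lambda>_. M) \<rightarrow>\<^sub>M PiM I (\<lambda>_. M)"
    using assms(3) unfolding compose_def by measurable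
  moreover have "distr (PiM I (\<lambda>_. M)) (PiM I (\<lambda>_. M)) (compose I f) = PiM I (\<lambda>_. M)"
    using assms(1-4) by (subst distr_PiM_finite_prob_space') auto
  ultimately show ?thesis
    using nn_integral_distr[of "compose I f" "PiM I (\<lambda>_. M)" "PiM I (\<lambda>_. M)" h] assms(5) by simp
qed

lemma measurable_compose_PiM:
  assumes "(\<lambda>(g, x). act g x) \<in> N \<Otimes>\<^sub>M M \<rightarrow>\<^sub>M M"
  shows "(\<lambda>p. compose I (act (fst p)) (snd p)) \<in> N \<Otimes>\<^sub>M PiM I (\<lambda>_. M) \<rightarrow>\<^sub>M PiM I (\<lambda>_. M)"
  unfolding compose_def
proof (rule measurable_restrict)
  fix i assume "i \<in> I"
  then have "(\<lambda>p. (fst p, snd p i)) \<in> N \<Otimes>\<^sub>M PiM I (\<lambda>_. M) \<rightarrow>\<^sub>M N \<Otimes>\<^sub>M M"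
    by measurable
  from measurable_compose[OF this assms]
  show "(\<lambda>p. act (fst p) (snd p i)) \<in> N \<Otimes>\<^sub>M PiM I (\<lambda>_. M) \<rightarrow>\<^sub>M M" by simp
qed

lemma rad_complexity_orbit_avg_le:
  assumes "prob_space lam" and "prob_space M"
    and act_meas: "(\<lambda>(g, x). act g x) \<in> lam \<Otimes>\<^sub>M M \<rightarrow>\<^sub>M M"
    and act_inv: "\<And>g. g \<in> space lam \<Longrightarrow> distr M M (act g) = M"
    and F_meas: "\<And>f. f \<in> F \<Longrightarrow> f \<in> borel_measurable M"
    and emp_meas: "(\<lambda>T. emp_rad n T F) \<in> borel_measurable (PiM {..<n} (\<lambda>_. M))"
  shows "rad_complexity M n ((\<lambda>f. orbit_avg lam act f) ` F) \<le> rad_complexity M n F"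
proof -
  interpret lam: prob_space lam by fact
  define P where "P = PiM {..<n} (\<lambda>_. M)"
  interpret P: prob_space P unfolding P_def by (intro prob_space_PiM \<open>prob_space M\<close>)
  interpret pair_sigma_finite lam P ..
  define shift where "shift g = compose {..<n} (act g)" for g
  have shift_meas: "(\<lambda>p. shift (fst p) (snd p)) \<in> lam \<Otimes>\<^sub>M P \<rightarrow>\<^sub>M P"
    unfolding shift_def P_def using act_meas by (rule measurable_compose_PiM)
  have emp_shift_meas: "(\<lambda>p. emp_rad n (shift (fst p) (snd p)) F) \<in> borel_measurable (lam \<Otimes>\<^sub>M P)"
    using measurable_compose[OF shift_meas emp_meas[folded P_def]] by simp
  have shift_inv: "(\<integral>\<^sup>+T. emp_rad n (shift g T) F \<partial>P) = (\<integral>\<^sup>+T. emp_rad n T F \<partial>P)"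
    if "g \<in> space lam" for g
    unfolding P_def shift_def
    using measurable_Pair2[OF act_meas that] act_inv[OF that]
    by (intro nn_integral_PiM_compose \<open>prob_space M\<close> emp_meas) simp_all
  have "rad_complexity M n ((\<lambda>f. orbit_avg lam act f) ` F)
      \<le> (\<integral>\<^sup>+T. (\<integral>\<^sup>+g. emp_rad n (shift g T) F \<partial>lam) \<partial>P)"
    unfolding rad_complexity_def P_def[symmetric]
  proof (rule nn_integral_mono)
    fix T assume T: "T \<in> space P"
    have "emp_rad n (shift g T) F = emp_rad n (\<lambda>i. act g (T i)) F" for g
      unfolding shift_def by (rule emp_rad_cong) (simp add: compose_def)
    moreover have "(\<lambda>g. emp_rad n (shift g T) F) \<in> borel_measurable lam"
      using measurable_Pair1[OF emp_shift_meas T] by simp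
    moreover have "(\<lambda>g. f (act g (T i))) \<in> borel_measurable lam" if "f \<in> F" "i < n" for f i
    proof -
      have "T i \<in> space M"
        using T that(2) by (auto simp: P_def space_PiM)
      from measurable_compose[OF measurable_Pair1[OF act_meas this] F_meas[OF that(1)]]
      show ?thesis by simp
    qed
    ultimately show "emp_rad n T ((\<lambda>f. orbit_avg lam act f) ` F) \<le> (\<integral>\<^sup>+g. emp_rad n (shift g T) F \<partial>lam)"
      using emp_rad_orbit_avg_le[of F n act T lam] by simp
  qed
  also have "\<dots> = (\<integral>\<^sup>+g. (\<integral>\<^sup>+T. emp_rad n (shift g T) F \<partial>P) \<partial>lam)"
    using Fubini[OF emp_shift_meas] by simp
  also have "\<dots> = (\<integral>\<^sup>+g. (\<integral>\<^sup>+T. emp_rad n T F \<partial>P) \<partial>lam)"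
    by (rule nn_integral_cong) (rule shift_inv)
  also have "\<dots> = rad_complexity M n F"
    by (simp add: lam.emeasure_space_1 rad_complexity_def P_def)
  finally show ?thesis .
qed

theorem proposition3p11:
  fixes lam :: "('g::{topological_group_add, t2_space, second_countable_topology}) measure"
    and act :: "'g \<Rightarrow> 'x::polish_space \<Rightarrow> 'x"
    and mu :: "'x measure"
    and F :: "('x \<Rightarrow> real) set"
    and n :: nat
  assumes compact_G: "compact (UNIV :: 'g set)"
    and haar: "haar_prob lam"
    and act: "measurable_action act"
    and mu_borel: "sets mu = sets borel"
    and mu_prob: "prob_space mu"
    and mu_inv: "\<forall>g. distr mu borel (act g) = mu"
    and F_L2: "\<forall>f\<in>F. f \<in> borel_measurable mu \<and> integrable mu (\<lambda>x. (f x)\<^sup>2)"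
    and meas_F: "(\<lambda>T. emp_rad n T F) \<in> borel_measurable (PiM {..<n} (\<lambda>_. mu))"
    and meas_Fbar: "(\<lambda>T. emp_rad n T ((\<lambda>f. orbit_avg lam act f) ` F))
                      \<in> borel_measurable (PiM {..<n} (\<lambda>_. mu))"
    and meas_Fperp: "(\<lambda>T. emp_rad n T ((\<lambda>f x. f x - orbit_avg lam act f x) ` F))
                      \<in> borel_measurable (PiM {..<n} (\<lambda>_. mu))"
    and fin_F: "rad_complexity mu n F < \<infinity>"
    and fin_Fbar: "rad_complexity mu n ((\<lambda>f. orbit_avg lam act f) ` F) < \<infinity>"
    and fin_Fperp: "rad_complexity mu n ((\<lambda>f x. f x - orbit_avg lam act f x) ` F) < \<infinity>"
  shows "0 \<le> enn2real (rad_complexity mu n F)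
              - enn2real (rad_complexity mu n ((\<lambda>f. orbit_avg lam act f) ` F))
       \<and> enn2real (rad_complexity mu n F)
              - enn2real (rad_complexity mu n ((\<lambda>f. orbit_avg lam act f) ` F))
         \<le> enn2real (rad_complexity mu n ((\<lambda>f x. f x - orbit_avg lam act f x) ` F))"
proof -
  have lam: "prob_space lam" "sets lam = sets borel"
    using haar by (auto simp: haar_prob_def)
  have act_meas: "(\<lambda>(g, x). act g x) \<in> lam \<Otimes>\<^sub>M mu \<rightarrow>\<^sub>M mu"
    using act unfolding measurable_action_def
    by (subst measurable_cong_sets[OF sets_pair_measure_cong[OF lam(2) mu_borel] mu_borel]) auto
  have act_inv: "distr mu mu (act g) = mu" for g
    using mu_inv distr_cong[where f = "act g" and g = "act g", OF refl mu_borel refl] by simp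
  have lower: "rad_complexity mu n ((\<lambda>f. orbit_avg lam act f) ` F) \<le> rad_complexity mu n F"
    using F_L2 by (intro rad_complexity_orbit_avg_le lam(1) mu_prob act_meas act_inv meas_F) auto
  have upper: "rad_complexity mu n F \<le> rad_complexity mu n ((\<lambda>f. orbit_avg lam act f) ` F)
      + rad_complexity mu n ((\<lambda>f x. f x - orbit_avg lam act f x) ` F)"
    by (rule rad_complexity_le_add[OF _ meas_Fbar meas_Fperp]) force
  show ?thesis
    using enn2real_mono[OF lower] enn2real_mono[OF upper] fin_F fin_Fbar fin_Fperp
    by (simp add: enn2real_plus ennreal_add_less_top)
qed

end
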